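(* Let $\mu:\mathbb{N}\to\mathbb{R}$ with increments $\gamma(n)=\mu(n+1)-\mu(n)$ satisfying $\gamma(n)\ge0$ and $\gamma(n+1)\le\gamma(n)$ for all $n\in\mathbb{N}$. Let $T,N,h$ be integers with $N\ge2$, $N\le T-1$ and $1\le h\le\lfloor N/2\rfloor$, and define $$\bar\mu=\frac1h\sum_{l=N-h+1}^{N}\mu(l).$$ Then $\bar\mu\le\mu(T)$ and $$\mu(T)-\bar\mu\le\frac12(2T-2N+h-1)\,\gamma(N-h+1).$$
   Context: In the paper $\mu$ is the expected-reward function of an arm (indexed by number of pulls), $N$ is the number of pulls of the arm before some round $t\le T$, and $h$ is the window width. *)

theory Defs
  imports Complex_Main
begin

end

theory Submission
  imports Defs
begin

text \<open>Since the increments of \<open>\<mu>\<close> decrease, every increment beyond the start \<open>N - h + 1\<close> of the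
  window is at most \<open>\<gamma> (N - h + 1)\<close>, so \<open>0 \<le> \<mu> T - \<mu> l \<le> (T - l) \<gamma> (N - h + 1)\<close> for every \<open>l\<close> in the
  window. Averaging over the window, the distances \<open>T - l\<close> form an arithmetic progression with
  mean \<open>(2T - 2N + h - 1) / 2\<close>.\<close>

lemma diff_le_of_increments_le:
  fixes f :: "nat \<Rightarrow> real"
  assumes "\<And>n. l \<le> n \<Longrightarrow> n < T \<Longrightarrow> f (Suc n) - f n \<le> c" and "l \<le> T"
  shows "f T - f l \<le> real (T - l) * c"
proof -
  have "f T - f l = (\<Sum>n = l..<T. f (Suc n) - f n)"
    using sum_Suc_diff' \<open>l \<le> T\<close> by metis
  also have "\<dots> \<le> real (card {l..<T}) * c"
    by (rule sum_bounded_above) (use assms(1) in auto)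
  finally show ?thesis by simp
qed

lemma sum_distances_from_window:
  assumes "h \<le> N" and "N \<le> T"
  shows "(\<Sum>l = N - h + 1..N. real (T - l)) = real h * (2 * real T - 2 * real N + real h - 1) / 2"
  using assms(1)
proof (induction h)
  case 0
  then show ?case by simp
next
  case (Suc h)
  have "{N - Suc h + 1..N} = insert (N - h) {N - h + 1..N}"
    using Suc.prems by auto
  then have "(\<Sum>l = N - Suc h + 1..N. real (T - l)) = real (T - (N - h)) + (\<Sum>l = N - h + 1..N. real (T - l))"
    by simp
  moreover have "real (T - (N - h)) = real T - real N + real h"
    using Suc.prems assms(2) by simp
  ultimately show ?case
    using Suc by (simp add: algebra_simps add_divide_distrib)
qed

theorem lemma7:
  fixes \<mu> :: "nat \<Rightarrow> real" and T N h :: nat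
  defines "\<gamma> \<equiv> (\<lambda>n. \<mu> (n + 1) - \<mu> n)"
  assumes inc: "\<And>n. \<gamma> n \<ge> 0"
    and dec: "\<And>n. \<gamma> (n + 1) \<le> \<gamma> n"
    and N2: "N \<ge> 2" and NT: "N + 1 \<le> T"
    and h1: "1 \<le> h" and hN: "h \<le> N div 2"
  defines "\<mu>bar \<equiv> (1 / real h) * (\<Sum>l = N - h + 1..N. \<mu> l)"
  shows "\<mu>bar \<le> \<mu> T \<and>
         \<mu> T - \<mu>bar \<le> (1/2) * (2 * real T - 2 * real N + real h - 1) * \<gamma> (N - h + 1)"
proof -
  let ?a = "N - h + 1"
  let ?c = "(1/2) * (2 * real T - 2 * real N + real h - 1) * \<gamma> ?a"
  have "h \<le> N" "N \<le> T" "0 < real h" using hN NT h1 by auto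
  have mono: "\<mu> l \<le> \<mu> T" if "l \<le> T" for l
    using lift_Suc_mono_le[of \<mu>] inc that by (simp add: \<gamma>_def)
  have gap: "\<mu> T - \<mu> l \<le> real (T - l) * \<gamma> ?a" if "?a \<le> l" "l \<le> T" for l
  proof (rule diff_le_of_increments_le[OF _ \<open>l \<le> T\<close>])
    fix n assume "l \<le> n"
    then show "\<mu> (Suc n) - \<mu> n \<le> \<gamma> ?a"
      using lift_Suc_antimono_le[of \<gamma> ?a n] dec \<open>?a \<le> l\<close> by (simp add: \<gamma>_def)
  qed
  define D where "D = (\<Sum>l = ?a..N. \<mu> T - \<mu> l)"
  have avg: "\<mu> T - \<mu>bar = D / real h"
    using \<open>h \<le> N\<close> \<open>0 < real h\<close> by (simp add: D_def \<mu>bar_def sum_subtractf field_simps)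
  have "0 \<le> D / real h"
    unfolding D_def using mono NT by (intro divide_nonneg_nonneg sum_nonneg) auto
  have "D \<le> (\<Sum>l = ?a..N. real (T - l)) * \<gamma> ?a"
    unfolding D_def sum_distrib_right using gap NT by (intro sum_mono) auto
  then have "D \<le> real h * (2 * real T - 2 * real N + real h - 1) / 2 * \<gamma> ?a"
    unfolding sum_distances_from_window[OF \<open>h \<le> N\<close> \<open>N \<le> T\<close>] .
  also have "\<dots> = ?c * real h"
    by simp
  finally have "D / real h \<le> ?c"
    using \<open>0 < real h\<close> by (simp add: pos_divide_le_eq)
  then show ?thesis
    using avg \<open>0 \<le> D / real h\<close> by simp
qed

end
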